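(* Let $\mathbf{R}^{\mathrm{o}}$ be a finite set of obligations, $\mathbf{R}=(\emptyset,\mathbf{R}^{\mathrm{o}})$, fix a set $\Gamma$ of alethic formulas relative to which the overriding relation $\triangleright$ is computed, and let $M$ be a replete $\mathbf{R}$-ordered model. For every Boolean formula $a$ and world $w$ of $M$: if $w\in\max_{\succeq_I}(\Vert a\Vert)$, then $w\models a$ and $w\models\bigvee_{H\in\mathit{maxf}(\mathbf{R}^{\mathrm{o}}_{\triangleright},a,\{a\})}\bigl(\bigwedge\mathrm{m}(H)\bigr)$, with $out_4^{+}$ as the underlying I/O operation.
   Context: Boolean formulas over propositional letters; $\models_{\mathrm{PL}}$ classical entailment, $\models_{\mathrm{S5}}$ S5 entailment. An obligation is $\bigcirc(B/A)$ ($A,B$ Boolean) with body $b=A$, head $h=B$. Overriding: $r_j\triangleright r_i$ iff (i) $\{h(r_i),h(r_j)\}\cup\Gamma\models_{\mathrm{S5}}\bot$; (ii) $b(r_j)\models_{\mathrm{PL}}b(r_i)$ and $b(r_i)\not\models_{\mathrm{PL}}b(r_j)$; (iii) $\{h(r_i),b(r_j)\}\not\models_{\mathrm{PL}}\bot$. An $\mathbf{R}$-ordered model (no normality conditionals) is $(W,\succeq_N,\succeq_I,v)$ with $W\neq\emptyset$, valuation $v$, $\succeq_N=W\times W$, and $w_1\succeq_I w_2$ iff $V(w_1)\subseteq V(w_2)$, where $V(w)=\{r_i\in\mathbf{R}^{\mathrm{o}}:w\models b(r_i)\wedge\neg h(r_i)$ and $w\not\models b(r_j)$ for all $r_j\in\mathbf{R}^{\mathrm{o}}$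 with $r_j\triangleright r_i\}$. $\max_{\succeq_I}(X)=\{w\in X:\forall u\in X(u\succeq_I w\Rightarrow w\succeq_I u)\}$, $\Vert a\Vert$ the set of worlds where $a$ holds. Replete: every PL-consistent Boolean formula holds at some world. I/O: for a set $H$ of pairs of Boolean formulas, $\mathrm{m}(H)=\{a\rightarrow x:(a,x)\in H\}$ ($\bigwedge\mathrm{m}(\emptyset)=\top$), $out_4^{+}(H,a)=\{x:\{a\}\cup\mathrm{m}(H)\models_{\mathrm{PL}}x\}$; $\mathit{maxf}(N,a,C)$ is the set of $\subseteq$-maximal $H\subseteq N$ with $out_4^{+}(H,a)\cup C$ PL-consistent. Translation: for $r_i=\bigcirc(x/a)$, $D(r_i)=\{r_j\in\mathbf{R}^{\mathrm{o}}:r_j\triangleright r_i\}$, $r_i^{\triangleright}=(a\wedge\bigwedge_{r_j\in D(r_i)}\neg b(r_j),x)$ if $D(r_i)\neq\emptyset$, else $(a,x)$; $\mathbf{R}^{\mathrm{o}}_{\triangleright}=\{r^{\triangleright}:r\in\mathbf{R}^{\mathrm{o}}\}$. *)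

theory Defs
  imports Main
begin

datatype 'p bform =
    BAtom 'p | BTop | BBot | BNeg "'p bform" | BAnd "'p bform" "'p bform"
  | BOr "'p bform" "'p bform" | BImp "'p bform" "'p bform"

primrec beval :: "('p \<Rightarrow> bool) \<Rightarrow> 'p bform \<Rightarrow> bool" where
  "beval v (BAtom p) = v p"
| "beval v BTop = True"
| "beval v BBot = False"
| "beval v (BNeg a) = (\<not> beval v a)"
| "beval v (BAnd a b) = (beval v a \<and> beval v b)"
| "beval v (BOr a b) = (beval v a \<or> beval v b)"
| "beval v (BImp a b) = (beval v a \<longrightarrow> beval v b)"

definition pl_entails :: "'p bform set \<Rightarrow> 'p bform \<Rightarrow> bool" where
  "pl_entails S x \<longleftrightarrow> (\<forall>v. (\<forall>s\<in>S. beval v s) \<longrightarrow> beval v x)"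

definition pl_consistent :: "'p bform set \<Rightarrow> bool" where
  "pl_consistent S \<longleftrightarrow> \<not> pl_entails S BBot"

fun BigAnd :: "'p bform list \<Rightarrow> 'p bform" where
  "BigAnd [] = BTop"
| "BigAnd [a] = a"
| "BigAnd (a # as) = BAnd a (BigAnd as)"

datatype 'p aform =
    AAtom 'p | ATop | ABot | ANeg "'p aform" | AAnd "'p aform" "'p aform"
  | AOr "'p aform" "'p aform" | AImp "'p aform" "'p aform" | ABox "'p aform"

primrec emb :: "'p bform \<Rightarrow> 'p aform" where
  "emb (BAtom p) = AAtom p"
| "emb BTop = ATop"
| "emb BBot = ABot"
| "emb (BNeg a) = ANeg (emb a)"
| "emb (BAnd a b) = AAnd (emb a) (emb b)"
| "emb (BOr a b) = AOr (emb a) (emb b)"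
| "emb (BImp a b) = AImp (emb a) (emb b)"

text \<open>S5 semantics: a model is a nonempty set of worlds with universal accessibility;
  worlds are identified with their valuations.\<close>
primrec s5eval :: "('p \<Rightarrow> bool) set \<Rightarrow> ('p \<Rightarrow> bool) \<Rightarrow> 'p aform \<Rightarrow> bool" where
  "s5eval W u (AAtom p) = u p"
| "s5eval W u ATop = True"
| "s5eval W u ABot = False"
| "s5eval W u (ANeg a) = (\<not> s5eval W u a)"
| "s5eval W u (AAnd a b) = (s5eval W u a \<and> s5eval W u b)"
| "s5eval W u (AOr a b) = (s5eval W u a \<or> s5eval W u b)"
| "s5eval W u (AImp a b) = (s5eval W u a \<longrightarrow> s5eval W u b)"
| "s5eval W u (ABox a) = (\<forall>u'\<in>W. s5eval W u' a)"

definition s5_entails :: "'p aform set \<Rightarrow> 'p aform \<Rightarrow> bool" where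
  "s5_entails S x \<longleftrightarrow>
     (\<forall>W u. u \<in> W \<longrightarrow> (\<forall>s\<in>S. s5eval W u s) \<longrightarrow> s5eval W u x)"

text \<open>An obligation \<open>\<bigcirc>(B/A)\<close> is represented as the pair \<open>(A, B)\<close>: body first, head second.\<close>
type_synonym 'p oblig = "'p bform \<times> 'p bform"

abbreviation body :: "'p oblig \<Rightarrow> 'p bform" where "body r \<equiv> fst r"
abbreviation head :: "'p oblig \<Rightarrow> 'p bform" where "head r \<equiv> snd r"

text \<open>\<open>overrides \<Gamma> rj ri\<close> means \<open>rj \<triangleright> ri\<close>.\<close>
definition overrides :: "'p aform set \<Rightarrow> 'p oblig \<Rightarrow> 'p oblig \<Rightarrow> bool" where
  "overrides \<Gamma> rj ri \<longleftrightarrow>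
     s5_entails ({emb (head ri), emb (head rj)} \<union> \<Gamma>) ABot
   \<and> pl_entails {body rj} (body ri) \<and> \<not> pl_entails {body ri} (body rj)
   \<and> \<not> pl_entails {head ri, body rj} BBot"

text \<open>A model is given by its set of worlds \<open>W\<close> and valuation \<open>v\<close>; \<open>\<succeq>_N = W \<times> W\<close> and
  \<open>\<succeq>_I\<close> is determined by \<open>Vset\<close>.\<close>
definition sat :: "('w \<Rightarrow> 'p \<Rightarrow> bool) \<Rightarrow> 'w \<Rightarrow> 'p bform \<Rightarrow> bool" where
  "sat v w a \<longleftrightarrow> beval (v w) a"

definition Vset :: "'p aform set \<Rightarrow> 'p oblig set \<Rightarrow> ('w \<Rightarrow> 'p \<Rightarrow> bool) \<Rightarrow> 'w \<Rightarrow> 'p oblig set" where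
  "Vset \<Gamma> Ro v w = {ri \<in> Ro. sat v w (body ri) \<and> \<not> sat v w (head ri)
       \<and> (\<forall>rj\<in>Ro. overrides \<Gamma> rj ri \<longrightarrow> \<not> sat v w (body rj))}"

definition geI :: "'p aform set \<Rightarrow> 'p oblig set \<Rightarrow> ('w \<Rightarrow> 'p \<Rightarrow> bool) \<Rightarrow> 'w \<Rightarrow> 'w \<Rightarrow> bool" where
  "geI \<Gamma> Ro v w1 w2 \<longleftrightarrow> Vset \<Gamma> Ro v w1 \<subseteq> Vset \<Gamma> Ro v w2"

definition maxI :: "'p aform set \<Rightarrow> 'p oblig set \<Rightarrow> ('w \<Rightarrow> 'p \<Rightarrow> bool) \<Rightarrow> 'w set \<Rightarrow> 'w set" where
  "maxI \<Gamma> Ro v X = {w \<in> X. \<forall>u\<in>X. geI \<Gamma> Ro v u w \<longrightarrow> geI \<Gamma> Ro v w u}"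

definition truthset :: "'w set \<Rightarrow> ('w \<Rightarrow> 'p \<Rightarrow> bool) \<Rightarrow> 'p bform \<Rightarrow> 'w set" where
  "truthset W v a = {w \<in> W. sat v w a}"

definition replete :: "'w set \<Rightarrow> ('w \<Rightarrow> 'p \<Rightarrow> bool) \<Rightarrow> bool" where
  "replete W v \<longleftrightarrow> (\<forall>a. pl_consistent {a} \<longrightarrow> (\<exists>w\<in>W. sat v w a))"

text \<open>\<open>(W, W \<times> W, \<succeq>_I, v)\<close> is an R-ordered model for \<open>R = (\<emptyset>, Ro)\<close>; the only
  requirement beyond the definitions above is \<open>W \<noteq> \<emptyset>\<close>.\<close>
definition R_ordered_model :: "'w set \<Rightarrow> ('w \<Rightarrow> 'p \<Rightarrow> bool) \<Rightarrow> bool" where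
  "R_ordered_model W v \<longleftrightarrow> W \<noteq> {}"

definition mat :: "'p oblig set \<Rightarrow> 'p bform set" where
  "mat H = {BImp a x | a x. (a, x) \<in> H}"

definition out4plus :: "'p oblig set \<Rightarrow> 'p bform \<Rightarrow> 'p bform set" where
  "out4plus H a = {x. pl_entails ({a} \<union> mat H) x}"

definition maxf :: "'p oblig set \<Rightarrow> 'p bform \<Rightarrow> 'p bform set \<Rightarrow> 'p oblig set set" where
  "maxf N a C = {H. H \<subseteq> N \<and> pl_consistent (out4plus H a \<union> C)
      \<and> (\<forall>H'. H \<subset> H' \<and> H' \<subseteq> N \<longrightarrow> \<not> pl_consistent (out4plus H' a \<union> C))}"

definition Dset :: "'p aform set \<Rightarrow> 'p oblig set \<Rightarrow> 'p oblig \<Rightarrow> 'p oblig set" where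
  "Dset \<Gamma> Ro ri = {rj \<in> Ro. overrides \<Gamma> rj ri}"

text \<open>\<open>\<And>_{rj \<in> D} \<not> b(rj)\<close>, using some enumeration of the finite set \<open>D\<close>.\<close>
definition negbodies :: "'p oblig set \<Rightarrow> 'p bform" where
  "negbodies D = BigAnd (map (\<lambda>rj. BNeg (body rj)) (SOME xs. set xs = D \<and> distinct xs))"

definition transl :: "'p aform set \<Rightarrow> 'p oblig set \<Rightarrow> 'p oblig \<Rightarrow> 'p oblig" where
  "transl \<Gamma> Ro r = (if Dset \<Gamma> Ro r = {} then r
                    else (BAnd (body r) (negbodies (Dset \<Gamma> Ro r)), head r))"

definition Rtransl :: "'p aform set \<Rightarrow> 'p oblig set \<Rightarrow> 'p oblig set" where
  "Rtransl \<Gamma> Ro = transl \<Gamma> Ro ` Ro"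

end

theory Submission
  imports Defs
begin

text \<open>For a world \<open>u\<close> let \<open>S(u)\<close> be the set of translated obligations whose material
  implications hold at \<open>u\<close>. The translation is built so that \<open>r\<^sup>\<triangleright>\<close> fails at \<open>u\<close> exactly
  when \<open>r\<close> is a violation in \<open>V(u)\<close>; hence \<open>u \<succeq>\<^sub>I w\<close> iff \<open>S(w) \<subseteq> S(u)\<close>, and the
  \<open>\<succeq>\<^sub>I\<close>-maximal \<open>a\<close>-worlds are those whose \<open>S\<close> is \<open>\<subseteq>\<close>-maximal among \<open>a\<close>-worlds.
  By repleteness every family of translated obligations that is consistent with \<open>a\<close>
  is satisfied at some \<open>a\<close>-world, so such a maximal \<open>S(w)\<close> is a maximal \<open>a\<close>-consistent
  family, i.e. a member of \<open>maxf\<close>, and \<open>w\<close> satisfies its materialisation.\<close>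

definition material :: "'p oblig \<Rightarrow> 'p bform" where
  "material r = BImp (body r) (head r)"

definition satisfied_obligs :: "'p oblig set \<Rightarrow> ('w \<Rightarrow> 'p \<Rightarrow> bool) \<Rightarrow> 'w \<Rightarrow> 'p oblig set" where
  "satisfied_obligs N v w = {r \<in> N. sat v w (material r)}"

lemma mat_eq_image_material: "mat H = material ` H"
  unfolding mat_def material_def by force

lemma beval_BigAnd: "beval v (BigAnd l) \<longleftrightarrow> (\<forall>x\<in>set l. beval v x)"
  by (induction l rule: BigAnd.induct) auto

lemma beval_negbodies:
  assumes "finite D"
  shows "beval v (negbodies D) \<longleftrightarrow> (\<forall>r\<in>D. \<not> beval v (body r))"
proof -
  have "set (SOME xs. set xs = D \<and> distinct xs) = D"
    using someI_ex[OF finite_distinct_list[OF assms]] by blast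
  then show ?thesis
    unfolding negbodies_def beval_BigAnd by auto
qed

lemma pl_consistent_out4plus_iff:
  "pl_consistent (out4plus H a \<union> C) \<longleftrightarrow>
     (\<exists>val. beval val a \<and> (\<forall>\<phi>\<in>mat H. beval val \<phi>) \<and> (\<forall>c\<in>C. beval val c))"
proof
  assume "pl_consistent (out4plus H a \<union> C)"
  then obtain val where val: "\<forall>s\<in>out4plus H a \<union> C. beval val s"
    unfolding pl_consistent_def pl_entails_def by auto
  have "{a} \<union> mat H \<subseteq> out4plus H a"
    unfolding out4plus_def pl_entails_def by auto
  with val show "\<exists>val. beval val a \<and> (\<forall>\<phi>\<in>mat H. beval val \<phi>) \<and> (\<forall>c\<in>C. beval val c)"
    by blast
next
  assume "\<exists>val. beval val a \<and> (\<forall>\<phi>\<in>mat H. beval val \<phi>) \<and> (\<forall>c\<in>C. beval val c)"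
  then show "pl_consistent (out4plus H a \<union> C)"
    unfolding pl_consistent_def pl_entails_def out4plus_def by fastforce
qed

lemma replete_satisfiable_finite:
  assumes "replete W v" and "finite S" and "\<forall>s\<in>S. beval val s"
  obtains u where "u \<in> W" and "\<forall>s\<in>S. sat v u s"
proof -
  obtain xs where xs: "set xs = S"
    using finite_list[OF assms(2)] by blast
  have "beval val (BigAnd xs)"
    using assms(3) xs unfolding beval_BigAnd by blast
  then have "pl_consistent {BigAnd xs}"
    unfolding pl_consistent_def pl_entails_def by auto
  then obtain u where "u \<in> W" "sat v u (BigAnd xs)"
    using assms(1) unfolding replete_def by blast
  with xs that show ?thesis
    unfolding sat_def beval_BigAnd by blast
qed

lemma sat_material_transl_iff:
  assumes "finite Ro" and "r \<in> Ro"
  shows "sat v w (material (transl \<Gamma> Ro r)) \<longleftrightarrow> r \<notin> Vset \<Gamma> Ro v w"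
proof -
  have "finite (Dset \<Gamma> Ro r)"
    using assms(1) unfolding Dset_def by auto
  with assms(2) show ?thesis
    unfolding transl_def Vset_def sat_def Dset_def material_def
    by (auto simp: beval_negbodies)
qed

lemma transl_in_satisfied_obligs_iff:
  assumes "finite Ro" and "r \<in> Ro"
  shows "transl \<Gamma> Ro r \<in> satisfied_obligs (Rtransl \<Gamma> Ro) v w \<longleftrightarrow> r \<notin> Vset \<Gamma> Ro v w"
  using sat_material_transl_iff[OF assms] assms(2)
  unfolding satisfied_obligs_def Rtransl_def by simp

lemma geI_iff_satisfied_obligs_subset:
  assumes "finite Ro"
  shows "geI \<Gamma> Ro v w u \<longleftrightarrow>
           satisfied_obligs (Rtransl \<Gamma> Ro) v u \<subseteq> satisfied_obligs (Rtransl \<Gamma> Ro) v w"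
    (is "_ \<longleftrightarrow> ?S u \<subseteq> ?S w")
proof
  assume "geI \<Gamma> Ro v w u"
  then have V: "Vset \<Gamma> Ro v w \<subseteq> Vset \<Gamma> Ro v u"
    unfolding geI_def .
  show "?S u \<subseteq> ?S w"
  proof
    fix t assume "t \<in> ?S u"
    then obtain r where r: "r \<in> Ro" "t = transl \<Gamma> Ro r"
      unfolding satisfied_obligs_def Rtransl_def by blast
    with \<open>t \<in> ?S u\<close> have "r \<notin> Vset \<Gamma> Ro v u"
      using transl_in_satisfied_obligs_iff[OF assms r(1), of \<Gamma> v u] by simp
    with V r show "t \<in> ?S w"
      using transl_in_satisfied_obligs_iff[OF assms r(1), of \<Gamma> v w] by auto
  qed
next
  assume S: "?S u \<subseteq> ?S w"
  show "geI \<Gamma> Ro v w u"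
    unfolding geI_def
  proof
    fix r assume "r \<in> Vset \<Gamma> Ro v w"
    moreover have "r \<in> Ro"
      using \<open>r \<in> Vset \<Gamma> Ro v w\<close> unfolding Vset_def by blast
    ultimately show "r \<in> Vset \<Gamma> Ro v u"
      using S transl_in_satisfied_obligs_iff[OF assms \<open>r \<in> Ro\<close>, of \<Gamma> v] by auto
  qed
qed

lemma maxI_iff_satisfied_obligs_maximal:
  assumes "finite Ro"
  shows "w \<in> maxI \<Gamma> Ro v X \<longleftrightarrow> w \<in> X \<and>
           (\<forall>u\<in>X. satisfied_obligs (Rtransl \<Gamma> Ro) v w \<subseteq> satisfied_obligs (Rtransl \<Gamma> Ro) v u
                \<longrightarrow> satisfied_obligs (Rtransl \<Gamma> Ro) v u = satisfied_obligs (Rtransl \<Gamma> Ro) v w)"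
  unfolding maxI_def geI_iff_satisfied_obligs_subset[OF assms] by blast

lemma satisfied_obligs_in_maxf:
  assumes "finite N" and "replete W v" and "w \<in> W" and "sat v w a"
    and maximal: "\<forall>u\<in>W. sat v u a \<longrightarrow> satisfied_obligs N v w \<subseteq> satisfied_obligs N v u
                    \<longrightarrow> satisfied_obligs N v u = satisfied_obligs N v w"
  shows "satisfied_obligs N v w \<in> maxf N a {a}"
proof -
  let ?S = "satisfied_obligs N v"
  have "pl_consistent (out4plus (?S w) a \<union> {a})"
    unfolding pl_consistent_out4plus_iff mat_eq_image_material
    using \<open>sat v w a\<close> unfolding satisfied_obligs_def sat_def by blast
  moreover have "\<not> pl_consistent (out4plus H a \<union> {a})" if H: "?S w \<subset> H" "H \<subseteq> N" for H
  proof
    assume "pl_consistent (out4plus H a \<union> {a})"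
    then obtain val where "\<forall>s\<in>insert a (material ` H). beval val s"
      unfolding pl_consistent_out4plus_iff mat_eq_image_material by auto
    moreover have "finite (insert a (material ` H))"
      using H(2) \<open>finite N\<close> finite_subset by blast
    ultimately obtain u where "u \<in> W" and u: "\<forall>s\<in>insert a (material ` H). sat v u s"
      using replete_satisfiable_finite[OF \<open>replete W v\<close>] by metis
    then have "H \<subseteq> ?S u"
      using H(2) unfolding satisfied_obligs_def by blast
    with H(1) maximal \<open>u \<in> W\<close> u show False
      by blast
  qed
  ultimately show ?thesis
    unfolding maxf_def satisfied_obligs_def by blast
qed

theorem theorem2:
  fixes Ro :: "'p oblig set" and \<Gamma> :: "'p aform set"
    and W :: "'w set" and v :: "'w \<Rightarrow> 'p \<Rightarrow> bool"
    and a :: "'p bform" and w :: 'w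
  assumes "finite Ro"
    and "R_ordered_model W v"
    and "replete W v"
    and "w \<in> maxI \<Gamma> Ro v (truthset W v a)"
  shows "sat v w a \<and>
         (\<exists>H \<in> maxf (Rtransl \<Gamma> Ro) a {a}. \<forall>\<phi> \<in> mat H. sat v w \<phi>)"
proof -
  \<comment> \<open>\<open>R_ordered_model W v\<close> only asks for \<open>W \<noteq> {}\<close>, which \<open>w \<in> W\<close> already gives.\<close>
  let ?S = "satisfied_obligs (Rtransl \<Gamma> Ro) v w"
  have "w \<in> W" "sat v w a"
    and maximal: "\<forall>u\<in>W. sat v u a \<longrightarrow> ?S \<subseteq> satisfied_obligs (Rtransl \<Gamma> Ro) v u
                    \<longrightarrow> satisfied_obligs (Rtransl \<Gamma> Ro) v u = ?S"
    using assms(4) unfolding maxI_iff_satisfied_obligs_maximal[OF assms(1)] truthset_def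
    by auto
  have "finite (Rtransl \<Gamma> Ro)"
    using assms(1) unfolding Rtransl_def by simp
  then have "?S \<in> maxf (Rtransl \<Gamma> Ro) a {a}"
    using satisfied_obligs_in_maxf[OF _ assms(3) \<open>w \<in> W\<close> \<open>sat v w a\<close> maximal] by blast
  moreover have "\<forall>\<phi> \<in> mat ?S. sat v w \<phi>"
    unfolding mat_eq_image_material satisfied_obligs_def by blast
  ultimately show ?thesis
    using \<open>sat v w a\<close> by blast
qed

end
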